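(* The logic $\mathsf{ICK}\oplus((p\wedge(p\mathrel{\Box\!\!\!\rightarrow} q))\to q)$ is sound and complete with respect to the class of conditional frames $(X,\leq,\mathcal{R})$ satisfying: if $x\in a$ then $x\in{\uparrow}(R_a[x])$, for all worlds $x$ and upsets $a$.
   Context: Formulas: $\phi ::= p\mid\bot\mid\phi\wedge\phi\mid\phi\vee\phi\mid\phi\to\phi\mid\phi\mathrel{\Box\!\!\!\rightarrow}\phi$. $\mathsf{ICK}\oplus\Gamma$ is the smallest set containing intuitionistic propositional logic, $\Gamma$, $(p\mathrel{\Box\!\!\!\rightarrow}(q\wedge r))\leftrightarrow((p\mathrel{\Box\!\!\!\rightarrow} q)\wedge(p\mathrel{\Box\!\!\!\rightarrow} r))$ and $(p\mathrel{\Box\!\!\!\rightarrow}\top)\leftrightarrow\top$, closed under uniform substitution, modus ponens and congruence rules for both arguments of $\mathrel{\Box\!\!\!\rightarrow}$. A conditional frame is $(X,\leq,\mathcal{R})$, $(X,\leq)$ a nonempty preorder, $\mathcal{R}=\{R_a\mid a\text{ an upset}\}$ with $(\leq\circ R_a)\subseteq(R_a\circ\leq)$; valuations assign upsets to letters and $x\models\phi\mathrel{\Box\!\!\!\rightarrow}\psi$ iff every $y$ with $xR_{V(\phi)}y$ satisfies $\psi$. ${\uparrow}S$ is the upward closure of $S$. *)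

theory Defs
  imports Main
begin

datatype fm =
    Var nat
  | Bot
  | And fm fm
  | Or fm fm
  | Imp fm fm
  | Cond fm fm

definition Top :: fm where "Top = Imp Bot Bot"

definition Iff :: "fm \<Rightarrow> fm \<Rightarrow> fm" where
  "Iff a b = And (Imp a b) (Imp b a)"

primrec subst :: "(nat \<Rightarrow> fm) \<Rightarrow> fm \<Rightarrow> fm" where
  "subst s (Var p) = s p"
| "subst s Bot = Bot"
| "subst s (And a b) = And (subst s a) (subst s b)"
| "subst s (Or a b) = Or (subst s a) (subst s b)"
| "subst s (Imp a b) = Imp (subst s a) (subst s b)"
| "subst s (Cond a b) = Cond (subst s a) (subst s b)"

inductive ICK_plus :: "fm set \<Rightarrow> fm \<Rightarrow> bool" for \<Gamma> :: "fm set" where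
  ax1: "ICK_plus \<Gamma> (Imp a (Imp b a))"
| ax2: "ICK_plus \<Gamma> (Imp (Imp a (Imp b c)) (Imp (Imp a b) (Imp a c)))"
| ax3: "ICK_plus \<Gamma> (Imp (And a b) a)"
| ax4: "ICK_plus \<Gamma> (Imp (And a b) b)"
| ax5: "ICK_plus \<Gamma> (Imp a (Imp b (And a b)))"
| ax6: "ICK_plus \<Gamma> (Imp a (Or a b))"
| ax7: "ICK_plus \<Gamma> (Imp b (Or a b))"
| ax8: "ICK_plus \<Gamma> (Imp (Imp a c) (Imp (Imp b c) (Imp (Or a b) c)))"
| ax9: "ICK_plus \<Gamma> (Imp Bot a)"
| extra: "g \<in> \<Gamma> \<Longrightarrow> ICK_plus \<Gamma> g"
| cond_and: "ICK_plus \<Gamma> (Iff (Cond (Var 0) (And (Var 1) (Var 2)))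
                               (And (Cond (Var 0) (Var 1)) (Cond (Var 0) (Var 2))))"
| cond_top: "ICK_plus \<Gamma> (Iff (Cond (Var 0) Top) Top)"
| usubst: "ICK_plus \<Gamma> a \<Longrightarrow> ICK_plus \<Gamma> (subst s a)"
| mp: "ICK_plus \<Gamma> (Imp a b) \<Longrightarrow> ICK_plus \<Gamma> a \<Longrightarrow> ICK_plus \<Gamma> b"
| cong_l: "ICK_plus \<Gamma> (Iff a b) \<Longrightarrow> ICK_plus \<Gamma> (Iff (Cond a c) (Cond b c))"
| cong_r: "ICK_plus \<Gamma> (Iff a b) \<Longrightarrow> ICK_plus \<Gamma> (Iff (Cond c a) (Cond c b))"

definition CMP :: fm where
  "CMP = Imp (And (Var 0) (Cond (Var 0) (Var 1))) (Var 1)"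

definition upset :: "'w set \<Rightarrow> ('w \<Rightarrow> 'w \<Rightarrow> bool) \<Rightarrow> 'w set \<Rightarrow> bool" where
  "upset X le a \<longleftrightarrow> a \<subseteq> X \<and> (\<forall>x\<in>a. \<forall>y\<in>X. le x y \<longrightarrow> y \<in> a)"

text \<open>A conditional frame: carrier X, preorder le on X, and a relation R a for
every upset a (the value of R on non-upsets is irrelevant).
The condition (\<le> \<circ> R_a) \<subseteq> (R_a \<circ> \<le>) is read diagrammatically:
x \<le> y and y R_a z imply x R_a w and w \<le> z for some w.\<close>
definition cond_frame :: "'w set \<Rightarrow> ('w \<Rightarrow> 'w \<Rightarrow> bool) \<Rightarrow> ('w set \<Rightarrow> 'w \<Rightarrow> 'w \<Rightarrow> bool) \<Rightarrow> bool" where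
  "cond_frame X le R \<longleftrightarrow>
     X \<noteq> {} \<and>
     (\<forall>x\<in>X. le x x) \<and>
     (\<forall>x\<in>X. \<forall>y\<in>X. \<forall>z\<in>X. le x y \<longrightarrow> le y z \<longrightarrow> le x z) \<and>
     (\<forall>a. upset X le a \<longrightarrow> (\<forall>x y. R a x y \<longrightarrow> x \<in> X \<and> y \<in> X)) \<and>
     (\<forall>a. upset X le a \<longrightarrow>
        (\<forall>x\<in>X. \<forall>y\<in>X. \<forall>z\<in>X. le x y \<longrightarrow> R a y z \<longrightarrow> (\<exists>w\<in>X. R a x w \<and> le w z)))"

definition up :: "'w set \<Rightarrow> ('w \<Rightarrow> 'w \<Rightarrow> bool) \<Rightarrow> 'w set \<Rightarrow> 'w set" where
  "up X le S = {z \<in> X. \<exists>y\<in>S. le y z}"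

definition valuation :: "'w set \<Rightarrow> ('w \<Rightarrow> 'w \<Rightarrow> bool) \<Rightarrow> (nat \<Rightarrow> 'w set) \<Rightarrow> bool" where
  "valuation X le V \<longleftrightarrow> (\<forall>p. upset X le (V p))"

fun sat :: "'w set \<Rightarrow> ('w \<Rightarrow> 'w \<Rightarrow> bool) \<Rightarrow> ('w set \<Rightarrow> 'w \<Rightarrow> 'w \<Rightarrow> bool)
            \<Rightarrow> (nat \<Rightarrow> 'w set) \<Rightarrow> 'w \<Rightarrow> fm \<Rightarrow> bool" where
  "sat X le R V x (Var p) = (x \<in> V p)"
| "sat X le R V x Bot = False"
| "sat X le R V x (And a b) = (sat X le R V x a \<and> sat X le R V x b)"
| "sat X le R V x (Or a b) = (sat X le R V x a \<or> sat X le R V x b)"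
| "sat X le R V x (Imp a b) =
     (\<forall>y\<in>X. le x y \<longrightarrow> sat X le R V y a \<longrightarrow> sat X le R V y b)"
| "sat X le R V x (Cond a b) =
     (\<forall>y. R {z \<in> X. sat X le R V z a} x y \<longrightarrow> sat X le R V y b)"

definition valid_frame :: "'w set \<Rightarrow> ('w \<Rightarrow> 'w \<Rightarrow> bool) \<Rightarrow> ('w set \<Rightarrow> 'w \<Rightarrow> 'w \<Rightarrow> bool) \<Rightarrow> fm \<Rightarrow> bool" where
  "valid_frame X le R a \<longleftrightarrow> (\<forall>V. valuation X le V \<longrightarrow> (\<forall>x\<in>X. sat X le R V x a))"

definition mp_condition :: "'w set \<Rightarrow> ('w \<Rightarrow> 'w \<Rightarrow> bool) \<Rightarrow> ('w set \<Rightarrow> 'w \<Rightarrow> 'w \<Rightarrow> bool) \<Rightarrow> bool" where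
  "mp_condition X le R \<longleftrightarrow>
     (\<forall>x\<in>X. \<forall>a. upset X le a \<longrightarrow> x \<in> a \<longrightarrow> x \<in> up X le {y. R a x y})"

definition valid_class :: "'w itself \<Rightarrow> fm \<Rightarrow> bool" where
  "valid_class _ a \<longleftrightarrow>
     (\<forall>(X :: 'w set) le R. cond_frame X le R \<longrightarrow> mp_condition X le R \<longrightarrow> valid_frame X le R a)"

end

(* Soundness: persistence and substitution make validity on a frame closed under the rules of
   ICK, and the frame condition validates CMP: if x is in a = [[p]] and forces p []-> q, some
   R_a-successor y of x lies below x, so q holds at y and, by persistence, at x.
   Completeness: in the canonical model of prime theories ordered by inclusion, x R_A y holds iff
   y contains every c with (p []-> c) in x for some p whose truth set is A.  The truth lemma for
   []-> rests on the closure of {c. (p []-> c) in x} under derivability and on the congruence rule,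
   which makes the relation depend only on the truth set of p.  Finally CMP gives x R_A x whenever
   x is in A, which is the frame condition. *)

theory Submission
  imports Defs
begin

lemma sat_Top [simp]: "sat X le R V x Top"
  by (simp add: Top_def)

context
  fixes X :: "'w set" and le :: "'w \<Rightarrow> 'w \<Rightarrow> bool" and R :: "'w set \<Rightarrow> 'w \<Rightarrow> 'w \<Rightarrow> bool"
  assumes frame: "cond_frame X le R"
begin

lemma cond_frame_refl: "x \<in> X \<Longrightarrow> le x x"
  using frame by (simp add: cond_frame_def)

lemma cond_frame_trans: "x \<in> X \<Longrightarrow> y \<in> X \<Longrightarrow> z \<in> X \<Longrightarrow> le x y \<Longrightarrow> le y z \<Longrightarrow> le x z"
  using frame unfolding cond_frame_def by blast

lemma cond_frame_R_carrier: "upset X le a \<Longrightarrow> R a x y \<Longrightarrow> x \<in> X \<and> y \<in> X"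
  using frame unfolding cond_frame_def by blast

lemma cond_frame_le_R_commute:
  "upset X le a \<Longrightarrow> x \<in> X \<Longrightarrow> y \<in> X \<Longrightarrow> z \<in> X \<Longrightarrow> le x y \<Longrightarrow> R a y z
   \<Longrightarrow> \<exists>w\<in>X. R a x w \<and> le w z"
  using frame unfolding cond_frame_def by blast

context
  fixes V :: "nat \<Rightarrow> 'w set"
  assumes val: "valuation X le V"
begin

lemma sat_mono: "x \<in> X \<Longrightarrow> y \<in> X \<Longrightarrow> le x y \<Longrightarrow> sat X le R V x a \<Longrightarrow> sat X le R V y a"
proof (induction a arbitrary: x y)
  case (Var p)
  then show ?case using val by (auto simp: valuation_def upset_def)
next
  case (Imp a b)
  then show ?case using cond_frame_trans[of x y] by auto
next
  case (Cond a b)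
  let ?A = "{z \<in> X. sat X le R V z a}"
  have "upset X le ?A" using Cond.IH(1) unfolding upset_def by blast
  show ?case
  proof (simp, intro allI impI)
    fix z assume "R ?A y z"
    then obtain w where "w \<in> X" "z \<in> X" "R ?A x w" "le w z"
      using cond_frame_R_carrier cond_frame_le_R_commute Cond.prems \<open>upset X le ?A\<close> by meson
    then show "sat X le R V z b" using Cond.IH(2) Cond.prems(4) by auto
  qed
qed auto

lemma upset_truth_set: "upset X le {x \<in> X. sat X le R V x a}"
  using sat_mono unfolding upset_def by blast

lemma sat_subst:
  "x \<in> X \<Longrightarrow> sat X le R V x (subst s a) = sat X le R (\<lambda>p. {y \<in> X. sat X le R V y (s p)}) x a"
proof (induction a arbitrary: x)
  case (Cond a b)
  let ?V' = "\<lambda>p. {y \<in> X. sat X le R V y (s p)}"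
  have A: "{y \<in> X. sat X le R V y (subst s a)} = {y \<in> X. sat X le R ?V' y a}"
    using Cond.IH(1) by blast
  have "sat X le R V y (subst s b) = sat X le R ?V' y b"
    if "R {y \<in> X. sat X le R V y (subst s a)} x y" for y
    using Cond.IH(2) cond_frame_R_carrier[OF upset_truth_set that] by blast
  then show ?case by (simp only: sat.simps subst.simps A[symmetric]) blast
qed auto

end

lemma valid_frame_subst: "valid_frame X le R a \<Longrightarrow> valid_frame X le R (subst s a)"
  unfolding valid_frame_def
  using sat_subst upset_truth_set by (simp add: valuation_def)

lemma valid_frame_Iff:
  "valid_frame X le R (Iff a b) \<longleftrightarrow>
   (\<forall>V. valuation X le V \<longrightarrow> {x \<in> X. sat X le R V x a} = {x \<in> X. sat X le R V x b})"
  unfolding valid_frame_def Iff_def using cond_frame_refl by auto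

lemma valid_frameI: "(\<And>V x. valuation X le V \<Longrightarrow> x \<in> X \<Longrightarrow> sat X le R V x a) \<Longrightarrow> valid_frame X le R a"
  by (simp add: valid_frame_def)

lemma valid_frame_mp: "valid_frame X le R (Imp a b) \<Longrightarrow> valid_frame X le R a \<Longrightarrow> valid_frame X le R b"
  unfolding valid_frame_def using cond_frame_refl by simp

lemma ICK_plus_valid_frame:
  assumes "\<forall>g \<in> \<Gamma>. valid_frame X le R g"
  shows "ICK_plus \<Gamma> a \<Longrightarrow> valid_frame X le R a"
proof (induction rule: ICK_plus.induct)
  case (ax1 a b)
  show ?case by (rule valid_frameI) (simp, meson sat_mono cond_frame_trans)
next
  case (ax2 a b c)
  show ?case
  proof (rule valid_frameI, simp only: sat.simps, intro ballI impI)
    fix V x y z w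
    assume "y \<in> X" "le x y"
      and abc: "\<forall>z\<in>X. le y z \<longrightarrow> sat X le R V z a \<longrightarrow>
                  (\<forall>w\<in>X. le z w \<longrightarrow> sat X le R V w b \<longrightarrow> sat X le R V w c)"
      and "z \<in> X" "le y z"
      and ab: "\<forall>w\<in>X. le z w \<longrightarrow> sat X le R V w a \<longrightarrow> sat X le R V w b"
      and w: "w \<in> X" "le z w" "sat X le R V w a"
    have "le y w" using cond_frame_trans \<open>y \<in> X\<close> \<open>z \<in> X\<close> \<open>le y z\<close> w by blast
    moreover have "sat X le R V w b" using ab w by blast
    ultimately show "sat X le R V w c" using abc w cond_frame_refl[OF w(1)] by blast
  qed
next
  case (ax5 a b)
  show ?case by (rule valid_frameI) (simp, meson sat_mono cond_frame_trans)
next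
  case (ax8 a c b)
  show ?case
  proof (rule valid_frameI, simp only: sat.simps, intro ballI impI)
    fix V x y z w
    assume "y \<in> X" "le x y" and ac: "\<forall>z\<in>X. le y z \<longrightarrow> sat X le R V z a \<longrightarrow> sat X le R V z c"
      and "z \<in> X" "le y z" and bc: "\<forall>w\<in>X. le z w \<longrightarrow> sat X le R V w b \<longrightarrow> sat X le R V w c"
      and "w \<in> X" "le z w" "sat X le R V w a \<or> sat X le R V w b"
    moreover have "le y w" using cond_frame_trans \<open>y \<in> X\<close> \<open>z \<in> X\<close> calculation by blast
    ultimately show "sat X le R V w c" using ac bc by blast
  qed
next
  case (extra g)
  then show ?case using assms by blast
next
  case (usubst a s)
  from usubst.IH show ?case by (rule valid_frame_subst)
next
  case (mp a b)
  from mp.IH show ?case by (rule valid_frame_mp)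
next
  case (cong_l a b c)
  then show ?case unfolding valid_frame_Iff by simp
next
  case (cong_r a b c)
  show ?case
    unfolding valid_frame_Iff
  proof (intro allI impI)
    fix V assume V: "valuation X le V"
    then have "\<forall>y\<in>X. sat X le R V y a \<longleftrightarrow> sat X le R V y b"
      using cong_r.IH unfolding valid_frame_Iff by blast
    moreover have "y \<in> X" if "R {z \<in> X. sat X le R V z c} x y" for x y
      using cond_frame_R_carrier[OF upset_truth_set[OF V] that] by blast
    ultimately show "{x \<in> X. sat X le R V x (Cond c a)} = {x \<in> X. sat X le R V x (Cond c b)}"
      by simp
  qed
qed (simp_all add: valid_frame_def Iff_def)

lemma valid_frame_CMP:
  assumes "mp_condition X le R"
  shows "valid_frame X le R CMP"
  unfolding valid_frame_def
proof (intro allI impI ballI)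
  fix V x assume "valuation X le V"
  then have p: "upset X le (V 0)" and q: "upset X le (V 1)"
    by (auto simp: valuation_def)
  then have "{y \<in> X. sat X le R V y (Var 0)} = V 0"
    by (auto simp: upset_def)
  moreover have "y \<in> V 1" if y: "y \<in> X" "y \<in> V 0" "\<forall>z. R (V 0) y z \<longrightarrow> z \<in> V 1" for y
  proof -
    obtain z where "R (V 0) y z" "le z y"
      using assms p y(1,2) unfolding mp_condition_def up_def by blast
    then show ?thesis using y(1,3) q cond_frame_R_carrier[OF p] unfolding upset_def by blast
  qed
  ultimately show "sat X le R V x CMP" by (simp add: CMP_def)
qed

end

lemma ICK_plus_CMP_sound: "ICK_plus {CMP} a \<Longrightarrow> valid_class TYPE('w) a"
  unfolding valid_class_def
proof (intro allI impI)
  fix X :: "'w set" and le R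
  assume "ICK_plus {CMP} a" "cond_frame X le R" "mp_condition X le R"
  then show "valid_frame X le R a"
    using ICK_plus_valid_frame[of X le R "{CMP}"] valid_frame_CMP[of X le R] by simp
qed

context
  fixes \<Gamma> :: "fm set"
begin

lemma ICK_plus_Imp_refl: "ICK_plus \<Gamma> (Imp a a)"
  by (meson ICK_plus.ax1 ICK_plus.ax2 ICK_plus.mp)

lemma ICK_plus_Top: "ICK_plus \<Gamma> Top"
  unfolding Top_def by (rule ICK_plus_Imp_refl)

lemma ICK_plus_IffI: "ICK_plus \<Gamma> (Imp a b) \<Longrightarrow> ICK_plus \<Gamma> (Imp b a) \<Longrightarrow> ICK_plus \<Gamma> (Iff a b)"
  unfolding Iff_def by (rule ICK_plus.mp[OF ICK_plus.mp[OF ax5]])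

lemma ICK_plus_IffD1: "ICK_plus \<Gamma> (Iff a b) \<Longrightarrow> ICK_plus \<Gamma> (Imp a b)"
  unfolding Iff_def by (rule ICK_plus.mp[OF ax3])

lemma ICK_plus_IffD2: "ICK_plus \<Gamma> (Iff a b) \<Longrightarrow> ICK_plus \<Gamma> (Imp b a)"
  unfolding Iff_def by (rule ICK_plus.mp[OF ax4])

lemma ICK_plus_Cond_And: "ICK_plus \<Gamma> (Iff (Cond p (And q r)) (And (Cond p q) (Cond p r)))"
  using usubst[OF cond_and, of \<Gamma> "\<lambda>n. if n = 0 then p else if n = 1 then q else r"]
  by (simp add: Iff_def)

lemma ICK_plus_Cond_Top: "ICK_plus \<Gamma> (Cond p Top)"
  using usubst[OF cond_top, of \<Gamma> "\<lambda>_. p"] ICK_plus_Top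
  by (simp add: Iff_def Top_def) (meson ICK_plus.mp ax4)

lemma ICK_plus_CMP: "CMP \<in> \<Gamma> \<Longrightarrow> ICK_plus \<Gamma> (Imp (And p (Cond p q)) q)"
  using usubst[OF extra, of CMP \<Gamma> "\<lambda>n. if n = 0 then p else q"]
  by (simp add: CMP_def)

lemma ICK_plus_Cond_necessitation: "ICK_plus \<Gamma> c \<Longrightarrow> ICK_plus \<Gamma> (Cond p c)"
proof -
  assume "ICK_plus \<Gamma> c"
  then have "ICK_plus \<Gamma> (Iff c Top)"
    using ICK_plus_Top by (blast intro: ICK_plus_IffI ICK_plus.mp ax1)
  then have "ICK_plus \<Gamma> (Imp (Cond p Top) (Cond p c))"
    by (blast intro: ICK_plus_IffD2 cong_r)
  then show ?thesis using ICK_plus_Cond_Top by (rule ICK_plus.mp)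
qed

text \<open>Rules are applied to theorems only, never to the hypotheses in G, so that the deduction
  theorem holds.\<close>

inductive derivable :: "fm set \<Rightarrow> fm \<Rightarrow> bool" for G :: "fm set" where
  provable: "ICK_plus \<Gamma> a \<Longrightarrow> derivable G a"
| assm: "a \<in> G \<Longrightarrow> derivable G a"
| mp: "derivable G (Imp a b) \<Longrightarrow> derivable G a \<Longrightarrow> derivable G b"

lemma derivable_deduction: "derivable (insert a G) b \<Longrightarrow> derivable G (Imp a b)"
proof (induction rule: derivable.induct)
  case (provable b)
  then show ?case by (blast intro: derivable.intros ax1)
next
  case (assm b)
  then show ?case by (blast intro: derivable.intros ax1 ICK_plus_Imp_refl)
next
  case (mp b c)
  then show ?case by (blast intro: derivable.intros ax2)
qed

lemma derivable_mono: "derivable G a \<Longrightarrow> G \<subseteq> H \<Longrightarrow> derivable H a"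
  by (induction rule: derivable.induct) (auto intro: derivable.intros)

lemma derivable_finite_subset: "derivable G a \<Longrightarrow> \<exists>F \<subseteq> G. finite F \<and> derivable F a"
proof (induction rule: derivable.induct)
  case (provable a)
  then show ?case using derivable.provable by blast
next
  case (assm a)
  then show ?case by (intro exI[of _ "{a}"]) (auto intro: derivable.assm)
next
  case (mp a b)
  then obtain F1 F2 where "F1 \<subseteq> G" "finite F1" "derivable F1 (Imp a b)"
    and "F2 \<subseteq> G" "finite F2" "derivable F2 a" by blast
  then show ?case by (intro exI[of _ "F1 \<union> F2"]) (auto intro: derivable.mp derivable_mono)
qed

lemma derivable_empty: "derivable {} a \<longleftrightarrow> ICK_plus \<Gamma> a"
proof
  show "derivable {} a \<Longrightarrow> ICK_plus \<Gamma> a"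
    by (induction rule: derivable.induct) (auto intro: ICK_plus.mp)
qed (rule derivable.provable)

lemma ICK_plus_Imp_iff_derivable: "ICK_plus \<Gamma> (Imp a b) \<longleftrightarrow> derivable {a} b"
  by (metis derivable.assm derivable.mp derivable.provable derivable_deduction derivable_empty singletonI)

lemma ICK_plus_Cond_mono: "ICK_plus \<Gamma> (Imp a b) \<Longrightarrow> ICK_plus \<Gamma> (Imp (Cond p a) (Cond p b))"
proof -
  assume ab: "ICK_plus \<Gamma> (Imp a b)"
  have "derivable {a} (And a b)"
    by (rule derivable.mp[OF derivable.mp[OF derivable.provable[OF ax5] derivable.assm]
          derivable.mp[OF derivable.provable[OF ab] derivable.assm]]) simp_all
  then have "ICK_plus \<Gamma> (Iff a (And a b))"
    using ICK_plus_Imp_iff_derivable ICK_plus_IffI ax3 by blast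
  then have "ICK_plus \<Gamma> (Imp (Cond p a) (Cond p (And a b)))"
    by (rule ICK_plus_IffD1[OF cong_r])
  then have "derivable {Cond p a} (And (Cond p a) (Cond p b))"
    using ICK_plus_IffD1[OF ICK_plus_Cond_And] ICK_plus_Imp_iff_derivable
    by (meson derivable.mp derivable.provable)
  then show ?thesis
    using ICK_plus_Imp_iff_derivable by (meson derivable.mp derivable.provable ax4)
qed

definition closed_theory :: "fm set \<Rightarrow> bool" where
  "closed_theory x \<longleftrightarrow> (\<forall>a. derivable x a \<longrightarrow> a \<in> x)"

definition prime_theory :: "fm set \<Rightarrow> bool" where
  "prime_theory x \<longleftrightarrow> closed_theory x \<and> Bot \<notin> x \<and> (\<forall>a b. Or a b \<in> x \<longrightarrow> a \<in> x \<or> b \<in> x)"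

lemma prime_theory_closed: "prime_theory x \<Longrightarrow> closed_theory x"
  by (simp add: prime_theory_def)

lemma closed_theory_provable: "closed_theory x \<Longrightarrow> ICK_plus \<Gamma> a \<Longrightarrow> a \<in> x"
  unfolding closed_theory_def using derivable.provable by blast

lemma closed_theory_mp: "closed_theory x \<Longrightarrow> Imp a b \<in> x \<Longrightarrow> a \<in> x \<Longrightarrow> b \<in> x"
  unfolding closed_theory_def using derivable.mp derivable.assm by blast

lemma closed_theory_provable_Imp: "closed_theory x \<Longrightarrow> ICK_plus \<Gamma> (Imp a b) \<Longrightarrow> a \<in> x \<Longrightarrow> b \<in> x"
  using closed_theory_mp closed_theory_provable by blast

lemma closed_theory_And: "closed_theory x \<Longrightarrow> And a b \<in> x \<longleftrightarrow> a \<in> x \<and> b \<in> x"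
  using closed_theory_provable_Imp[OF _ ax3] closed_theory_provable_Imp[OF _ ax4]
    closed_theory_mp[OF _ closed_theory_provable_Imp[OF _ ax5]] by blast

lemma prime_theory_Or: "prime_theory x \<Longrightarrow> Or a b \<in> x \<longleftrightarrow> a \<in> x \<or> b \<in> x"
  unfolding prime_theory_def
  using closed_theory_provable_Imp[OF _ ax6] closed_theory_provable_Imp[OF _ ax7] by blast

lemma closed_theory_Cond_derivable:
  assumes x: "closed_theory x"
  shows "derivable {c. Cond p c \<in> x} a \<Longrightarrow> Cond p a \<in> x"
proof (induction rule: derivable.induct)
  case (provable a)
  then show ?case by (rule closed_theory_provable[OF x ICK_plus_Cond_necessitation])
next
  case (mp a b)
  have "ICK_plus \<Gamma> (Imp (And (Imp a b) a) b)"
    unfolding ICK_plus_Imp_iff_derivable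
    by (rule derivable.mp[OF derivable.mp[OF derivable.provable[OF ax3] derivable.assm]
          derivable.mp[OF derivable.provable[OF ax4] derivable.assm]]) simp_all
  then have "ICK_plus \<Gamma> (Imp (Cond p (And (Imp a b) a)) (Cond p b))"
    by (rule ICK_plus_Cond_mono)
  moreover have "Cond p (And (Imp a b) a) \<in> x"
    using mp.IH closed_theory_And[OF x]
      closed_theory_provable_Imp[OF x ICK_plus_IffD2[OF ICK_plus_Cond_And]] by blast
  ultimately show ?case by (rule closed_theory_provable_Imp[OF x])
qed simp

lemma prime_theory_if_maximal:
  assumes c: "\<not> derivable x c" and max: "\<And>a. a \<notin> x \<Longrightarrow> derivable (insert a x) c"
  shows "prime_theory x"
  unfolding prime_theory_def closed_theory_def
proof (intro conjI allI impI)
  show "a \<in> x" if "derivable x a" for a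
    using c max[THEN derivable_deduction] derivable.mp[OF _ that] by blast
  show "Bot \<notin> x"
    using c derivable.mp[OF derivable.provable[OF ax9] derivable.assm] by blast
  show "a \<in> x \<or> b \<in> x" if "Or a b \<in> x" for a b
  proof (rule ccontr)
    assume "\<not> (a \<in> x \<or> b \<in> x)"
    then have "derivable x (Imp a c)" "derivable x (Imp b c)"
      using max derivable_deduction by blast+
    then have "derivable x c"
      using derivable.mp[OF derivable.mp[OF derivable.mp[OF derivable.provable[OF ax8]]]]
        derivable.assm[OF that] by blast
    with c show False ..
  qed
qed

lemma maximal_non_derivable_exists:
  assumes "\<not> derivable G c"
  shows "\<exists>x. G \<subseteq> x \<and> \<not> derivable x c \<and> (\<forall>a. a \<notin> x \<longrightarrow> derivable (insert a x) c)"
proof -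
  let ?A = "{H. G \<subseteq> H \<and> \<not> derivable H c}"
  have "\<exists>x\<in>?A. \<forall>H\<in>?A. x \<subseteq> H \<longrightarrow> H = x"
  proof (rule subset_Zorn_nonempty)
    show "?A \<noteq> {}" using assms by blast
  next
    fix C assume C: "C \<noteq> {}" "subset.chain ?A C"
    then have C_A: "C \<subseteq> ?A" by (simp add: subset.chain_def)
    have "\<not> derivable (\<Union>C) c"
    proof
      assume "derivable (\<Union>C) c"
      then obtain F where F: "F \<subseteq> \<Union>C" "finite F" "derivable F c"
        using derivable_finite_subset by blast
      then obtain H where "H \<in> C" "F \<subseteq> H"
        using finite_subset_Union_chain[OF F(2,1) C] by blast
      then show False using C_A derivable_mono[OF F(3)] by blast
    qed
    moreover have "G \<subseteq> \<Union>C" using C(1) C_A by blast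
    ultimately show "\<Union>C \<in> ?A" by blast
  qed
  then obtain x where x: "x \<in> ?A" and max: "\<forall>H\<in>?A. x \<subseteq> H \<longrightarrow> H = x" ..
  have "derivable (insert a x) c" if "a \<notin> x" for a
  proof (rule ccontr)
    assume "\<not> derivable (insert a x) c"
    then have "insert a x \<in> ?A" using x by blast
    then show False using max that by blast
  qed
  with x show ?thesis by blast
qed

lemma lindenbaum: "\<not> derivable G c \<Longrightarrow> \<exists>x. G \<subseteq> x \<and> prime_theory x \<and> c \<notin> x"
proof -
  assume "\<not> derivable G c"
  then obtain x where "G \<subseteq> x" "\<not> derivable x c" "\<forall>a. a \<notin> x \<longrightarrow> derivable (insert a x) c"
    using maximal_non_derivable_exists by blast
  moreover from this have "c \<notin> x" using derivable.assm by blast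
  ultimately show ?thesis using prime_theory_if_maximal by blast
qed

definition truth_set :: "fm \<Rightarrow> fm set set" where
  "truth_set a = {x. prime_theory x \<and> a \<in> x}"

text \<open>For an upset A that is not a truth set the last conjunct is vacuous.\<close>

definition canonical_R :: "fm set set \<Rightarrow> fm set \<Rightarrow> fm set \<Rightarrow> bool" where
  "canonical_R A x y \<longleftrightarrow> prime_theory x \<and> prime_theory y \<and>
     (\<forall>p c. truth_set p = A \<longrightarrow> Cond p c \<in> x \<longrightarrow> c \<in> y)"

definition canonical_val :: "nat \<Rightarrow> fm set set" where
  "canonical_val n = truth_set (Var n)"

lemma ICK_plus_Imp_if_truth_set_subset:
  assumes "truth_set a \<subseteq> truth_set b"
  shows "ICK_plus \<Gamma> (Imp a b)"
proof (rule ccontr)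
  assume "\<not> ICK_plus \<Gamma> (Imp a b)"
  then have "\<not> derivable {a} b" by (simp add: ICK_plus_Imp_iff_derivable)
  then obtain x where "prime_theory x" "a \<in> x" "b \<notin> x" using lindenbaum by blast
  then show False using assms by (auto simp: truth_set_def)
qed

lemma prime_theory_Imp:
  assumes x: "prime_theory x"
  shows "Imp a b \<in> x \<longleftrightarrow> (\<forall>y. prime_theory y \<longrightarrow> x \<subseteq> y \<longrightarrow> a \<in> y \<longrightarrow> b \<in> y)"
proof
  assume "Imp a b \<in> x"
  show "\<forall>y. prime_theory y \<longrightarrow> x \<subseteq> y \<longrightarrow> a \<in> y \<longrightarrow> b \<in> y"
  proof (intro allI impI)
    fix y assume y: "prime_theory y" "x \<subseteq> y" "a \<in> y"
    with \<open>Imp a b \<in> x\<close> have "Imp a b \<in> y" by blast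
    from closed_theory_mp[OF prime_theory_closed[OF y(1)] this y(3)] show "b \<in> y" .
  qed
next
  assume extensions: "\<forall>y. prime_theory y \<longrightarrow> x \<subseteq> y \<longrightarrow> a \<in> y \<longrightarrow> b \<in> y"
  show "Imp a b \<in> x"
  proof (rule ccontr)
    assume "Imp a b \<notin> x"
    then have "\<not> derivable x (Imp a b)"
      using prime_theory_closed[OF x] unfolding closed_theory_def by blast
    then have "\<not> derivable (insert a x) b"
      using derivable_deduction by blast
    from lindenbaum[OF this] obtain y where "insert a x \<subseteq> y" "prime_theory y" "b \<notin> y"
      by blast
    with extensions show False by simp
  qed
qed

lemma prime_theory_Cond:
  assumes x: "prime_theory x"
  shows "Cond a b \<in> x \<longleftrightarrow> (\<forall>y. canonical_R (truth_set a) x y \<longrightarrow> b \<in> y)"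
proof
  show "Cond a b \<in> x \<Longrightarrow> \<forall>y. canonical_R (truth_set a) x y \<longrightarrow> b \<in> y"
    by (simp add: canonical_R_def)
next
  assume successors: "\<forall>y. canonical_R (truth_set a) x y \<longrightarrow> b \<in> y"
  show "Cond a b \<in> x"
  proof (rule ccontr)
    assume "Cond a b \<notin> x"
    then have "\<not> derivable {c. Cond a c \<in> x} b"
      using closed_theory_Cond_derivable[OF prime_theory_closed[OF x]] by blast
    then obtain y where y: "{c. Cond a c \<in> x} \<subseteq> y" "prime_theory y" "b \<notin> y"
      using lindenbaum by blast
    have "c \<in> y" if p: "truth_set p = truth_set a" "Cond p c \<in> x" for p c
    proof -
      have "ICK_plus \<Gamma> (Iff p a)"
        using p(1) by (simp add: ICK_plus_IffI ICK_plus_Imp_if_truth_set_subset)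
      then have "Cond a c \<in> x"
        by (rule closed_theory_provable_Imp[OF prime_theory_closed[OF x] ICK_plus_IffD1[OF cong_l] p(2)])
      then show ?thesis using y(1) by blast
    qed
    then have "canonical_R (truth_set a) x y" using x y(2) by (simp add: canonical_R_def)
    with successors y(3) show False by blast
  qed
qed

lemma canonical_truth_lemma:
  "prime_theory x \<Longrightarrow> sat (Collect prime_theory) (\<subseteq>) canonical_R canonical_val x a \<longleftrightarrow> a \<in> x"
proof (induction a arbitrary: x)
  case (Var n)
  then show ?case by (simp add: canonical_val_def truth_set_def)
next
  case Bot
  then show ?case by (simp add: prime_theory_def)
next
  case (And a b)
  then show ?case
    by (simp only: sat.simps closed_theory_And[OF prime_theory_closed[OF And.prems]])
next
  case (Or a b)
  then show ?case by (simp add: prime_theory_Or)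
next
  case (Imp a b)
  then show ?case by (simp add: prime_theory_Imp)
next
  case (Cond a b)
  have "{y \<in> Collect prime_theory. sat (Collect prime_theory) (\<subseteq>) canonical_R canonical_val y a}
        = truth_set a"
    using Cond.IH(1) by (auto simp: truth_set_def)
  moreover have "sat (Collect prime_theory) (\<subseteq>) canonical_R canonical_val y b \<longleftrightarrow> b \<in> y"
    if "canonical_R (truth_set a) x y" for y
    using that by (intro Cond.IH(2)) (simp add: canonical_R_def)
  ultimately show ?case
    by (simp add: prime_theory_Cond[OF Cond.prems])
qed

lemma cond_frame_canonical:
  "Collect prime_theory \<noteq> {} \<Longrightarrow> cond_frame (Collect prime_theory) (\<subseteq>) canonical_R"
  unfolding cond_frame_def
proof (intro conjI ballI allI impI)
  fix A x y z assume "x \<subseteq> y" "canonical_R A y z" "x \<in> Collect prime_theory"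
  then show "\<exists>w \<in> Collect prime_theory. canonical_R A x w \<and> w \<subseteq> z"
    by (intro bexI[of _ z]) (auto simp: canonical_R_def)
qed (auto simp: canonical_R_def)

lemma valuation_canonical: "valuation (Collect prime_theory) (\<subseteq>) canonical_val"
  unfolding valuation_def upset_def canonical_val_def truth_set_def by blast

lemma mp_condition_canonical:
  assumes "CMP \<in> \<Gamma>"
  shows "mp_condition (Collect prime_theory) (\<subseteq>) canonical_R"
  unfolding mp_condition_def up_def
proof (intro ballI allI impI)
  fix x A assume x: "x \<in> Collect prime_theory" and A: "upset (Collect prime_theory) (\<subseteq>) A" "x \<in> A"
  have "c \<in> x" if "truth_set p = A" "Cond p c \<in> x" for p c
  proof -
    have closed: "closed_theory x" using x by (simp add: prime_theory_closed)
    have "p \<in> x" using that(1) A(2) by (auto simp: truth_set_def)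
    with that(2) have "And p (Cond p c) \<in> x" by (simp add: closed_theory_And[OF closed])
    then show ?thesis by (rule closed_theory_provable_Imp[OF closed ICK_plus_CMP[OF assms]])
  qed
  then have "canonical_R A x x" using x by (simp add: canonical_R_def)
  then show "x \<in> {z \<in> Collect prime_theory. \<exists>y \<in> {y. canonical_R A x y}. y \<subseteq> z}"
    using x by blast
qed

end

lemma ICK_plus_CMP_complete:
  assumes "valid_class TYPE(fm set) a"
  shows "ICK_plus {CMP} a"
proof (rule ccontr)
  let ?X = "Collect (prime_theory {CMP})"
  assume "\<not> ICK_plus {CMP} a"
  then have "\<not> derivable {CMP} {} a" by (simp add: derivable_empty)
  from lindenbaum[OF this] obtain x where x: "prime_theory {CMP} x" "a \<notin> x" by blast
  then have "cond_frame ?X (\<subseteq>) (canonical_R {CMP})"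
    by (intro cond_frame_canonical) blast
  moreover have "mp_condition ?X (\<subseteq>) (canonical_R {CMP})"
    by (rule mp_condition_canonical) simp
  ultimately have "valid_frame ?X (\<subseteq>) (canonical_R {CMP}) a"
    using assms unfolding valid_class_def by blast
  then have "sat ?X (\<subseteq>) (canonical_R {CMP}) (canonical_val {CMP}) x a"
    using x(1) valuation_canonical unfolding valid_frame_def by blast
  with x show False by (simp add: canonical_truth_lemma)
qed

theorem proposition5p8:
  fixes a :: fm
  shows "(ICK_plus {CMP} a \<longrightarrow> valid_class TYPE('w) a)
       \<and> (valid_class TYPE(fm set) a \<longrightarrow> ICK_plus {CMP} a)"
  using ICK_plus_CMP_sound ICK_plus_CMP_complete by blast

end
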